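(* Let $p>p_0\ge1$, $f_n\in C[0,1]^p$, and suppose there exist $\widetilde f_n\in C[0,1]^{p_0}$ and $\eta_n>0$ with $\sup_{\mathbf{x}\in[0,1]^p}|f_n(\mathbf{x})-\widetilde f_n(x_1,\ldots,x_{p_0})|<\eta_n$, and a positive constant $\tau$ with $|\int_{[0,1]^p}x_jf_n(\mathbf{x})d\mathbf{x}-\frac12\int_{[0,1]^p}f_n(\mathbf{x})d\mathbf{x}|>\tau$ for each $j=1,\ldots,p_0$. Then for every $\mathcal{A}\subset Z_p$, $$\beta_{Z_p}(\mathcal{A})_j=12\left(\int_{[0,1]^p}x_jf_n(\mathbf{x})d\mathbf{x}-\frac12\int_{[0,1]^p}f_n(\mathbf{x})d\mathbf{x}\right),\quad j\in\mathcal{A},$$ $$\beta_0(\mathcal{A})=\int_{[0,1]^p}f_n(\mathbf{x})d\mathbf{x}-\sum_{j\in\mathcal{A}}\beta_{Z_p}(\mathcal{A})_j/2.$$ Furthermore, $|\beta_{Z_p}(\mathcal{A})_j|>12\tau$ for $j\in\mathcal{A}\cap\mathcal{A}_0$ and $|\beta_{Z_p}(\mathcal{A})_j|<12\eta_n$ for $j\in\mathcal{A}\setminus\mathcal{A}_0$.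
   Context: $Z_d=\{1,\ldots,d\}$, $\mathcal{A}_0=Z_{p_0}$. For $\mathcal{A}\subset Z_p$ and $\mathbf{x}\in[0,1]^p$, $\mathbf{x}_{\mathcal{A}}$ is the subvector of coordinates in $\mathcal{A}$. $(\beta_0(\mathcal{A}),\boldsymbol\beta(\mathcal{A})')'\in\mathbb{R}\times\mathbb{R}^{|\mathcal{A}|}$ minimizes $\int_{[0,1]^p}[f_n(\mathbf{x})-\phi_0-\boldsymbol\phi'\mathbf{x}_{\mathcal{A}}]^2d\mathbf{x}$ over $(\phi_0,\boldsymbol\phi)$, and $\boldsymbol\beta_{Z_p}(\mathcal{A})=(\beta_{Z_p}(\mathcal{A})_1,\ldots,\beta_{Z_p}(\mathcal{A})_p)'$ is the $p$-vector whose coordinates indexed by $\mathcal{A}$ equal $\boldsymbol\beta(\mathcal{A})$ and whose other coordinates are $0$. *)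

theory Defs
  imports "HOL-Probability.Probability"
begin

text \<open>Points of [0,1]^p are represented as extensional functions on the index set Z_p = {1..p}.\<close>

definition cube :: "nat \<Rightarrow> (nat \<Rightarrow> real) set" where
  "cube p = PiE {1..p} (\<lambda>_. {0..1})"

definition cubeM :: "nat \<Rightarrow> (nat \<Rightarrow> real) measure" where
  "cubeM p = PiM {1..p} (\<lambda>_. restrict_space lborel {0..1})"

definition lsq_risk :: "((nat \<Rightarrow> real) \<Rightarrow> real) \<Rightarrow> nat \<Rightarrow> nat set \<Rightarrow> real \<Rightarrow> (nat \<Rightarrow> real) \<Rightarrow> real" where
  "lsq_risk f p A c0 c = (\<integral>x. (f x - c0 - (\<Sum>j\<in>A. c j * x j))\<^sup>2 \<partial>cubeM p)"

text \<open>(b0, b) is (beta_0(A), beta_{Z_p}(A)): b minimizes the risk over coefficients indexed by A,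
  and b vanishes outside A.\<close>
definition is_lsq_coef :: "((nat \<Rightarrow> real) \<Rightarrow> real) \<Rightarrow> nat \<Rightarrow> nat set \<Rightarrow> real \<Rightarrow> (nat \<Rightarrow> real) \<Rightarrow> bool" where
  "is_lsq_coef f p A b0 b \<longleftrightarrow>
     (\<forall>j. j \<notin> A \<longrightarrow> b j = 0) \<and> (\<forall>c0 c. lsq_risk f p A b0 b \<le> lsq_risk f p A c0 c)"

end

theory Submission
  imports Defs
begin

text \<open>Under the uniform distribution on the cube the centred coordinates \<open>x\<^sub>j - 1/2\<close> have mean 0,
  variance 1/12 and are pairwise orthogonal. Writing \<open>m\<^sub>j = \<integral>(x\<^sub>j - 1/2) f\<close>, the risk therefore splits as
  a constant plus \<open>(c\<^sub>0 + \<Sum>c\<^sub>j/2 - \<integral>f)\<^sup>2 + \<Sum>(c\<^sub>j - 12 m\<^sub>j)\<^sup>2/12\<close>, so the minimiser is unique and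
  explicit, and \<open>m\<^sub>j = \<integral>x\<^sub>j f - \<integral>f/2\<close> gives the first bound. For \<open>j > p\<^sub>0\<close>, \<open>f\<close> is uniformly
  close to a function not depending on \<open>x\<^sub>j\<close>; integrating \<open>x\<^sub>j\<close> out first (Fubini), that function
  contributes nothing against \<open>x\<^sub>j - 1/2\<close>, which leaves \<open>|m\<^sub>j| \<le> \<eta>/2\<close>.\<close>

abbreviation unitM :: "real measure" where
  "unitM \<equiv> restrict_space lborel {0..1}"

lemma prob_space_unitM: "prob_space unitM"
  by (rule prob_spaceI) (simp add: space_restrict_space emeasure_restrict_space)

lemma product_prob_space_unitM: "product_prob_space (\<lambda>_::nat. unitM)"
  by (simp add: product_prob_space_def product_prob_space_axioms_def product_sigma_finite_def
      prob_space_unitM prob_space_imp_sigma_finite)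

lemma prob_space_cubeM: "prob_space (cubeM p)"
  unfolding cubeM_def by (rule prob_space_PiM) (rule prob_space_unitM)

lemma space_cubeM: "space (cubeM p) = cube p"
  by (simp add: cubeM_def cube_def space_PiM space_restrict_space)

lemma compact_cube: "compact (cube p)"
proof -
  have "cube p = PiE UNIV (\<lambda>i. if i \<in> {1..p} then {0..1} else {undefined})"
    by (auto simp: cube_def PiE_def extensional_def Pi_def split: if_splits)
  then have "compactin (product_topology (\<lambda>i. euclidean) UNIV) (cube p)"
    by (simp add: compactin_PiE)
  then show ?thesis by (simp add: euclidean_product_topology compactin_euclidean_iff)
qed

lemma continuous_on_coordinate [continuous_intros]:
  "continuous_on S (\<lambda>x::'a \<Rightarrow> 'b::topological_space. x i)"
  by (rule continuous_on_product_then_coordinatewise[OF continuous_on_id])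

lemma bounded_continuous_on_cube:
  assumes "continuous_on (cube p) (f :: _ \<Rightarrow> real)"
  obtains B where "\<And>x. x \<in> cube p \<Longrightarrow> \<bar>f x\<bar> \<le> B"
  using compact_imp_bounded[OF compact_continuous_image[OF assms compact_cube]]
  by (auto simp: bounded_iff)

lemma measurable_cubeM_coordinate: "(\<lambda>x. x i) \<in> borel_measurable (cubeM p)"
proof (cases "i \<in> {1..p}")
  case True
  have "(\<lambda>x. x i) \<in> measurable (cubeM p) unitM"
    unfolding cubeM_def using True by (rule measurable_component_singleton)
  then show ?thesis
    by (metis measurable_lborel1 measurable_restrict_space2_iff)
next
  case False
  then have "\<And>x. x \<in> space (cubeM p) \<Longrightarrow> x i = undefined"
    by (auto simp: space_cubeM cube_def)
  moreover have "(\<lambda>_. undefined :: real) \<in> borel_measurable (cubeM p)"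
    by simp
  ultimately show ?thesis
    by (rule measurable_cong[THEN iffD2])
qed

lemma borel_measurable_cubeM_continuous_on:
  assumes "continuous_on (cube p) f"
  shows "f \<in> borel_measurable (cubeM p)"
proof -
  have "(\<lambda>x. x) \<in> measurable (cubeM p) (restrict_space borel (cube p))"
    by (rule measurable_restrict_space2)
      (auto simp: space_cubeM intro: measurable_coordinatewise_then_product measurable_cubeM_coordinate)
  from measurable_comp[OF this borel_measurable_continuous_on_restrict[OF assms]]
  show ?thesis by (simp add: comp_def)
qed

lemma integrable_cubeM_continuous_on:
  assumes "continuous_on (cube p) f"
  shows "integrable (cubeM p) (f :: _ \<Rightarrow> real)"
proof -
  interpret prob_space "cubeM p" by (rule prob_space_cubeM)
  obtain B where "\<And>x. x \<in> cube p \<Longrightarrow> \<bar>f x\<bar> \<le> B"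
    using bounded_continuous_on_cube[OF assms] by blast
  then show ?thesis
    by (intro integrable_const_bound[of _ B] borel_measurable_cubeM_continuous_on assms)
      (auto simp: space_cubeM)
qed

lemma integrable_unitM_continuous_on:
  assumes "continuous_on {0..1} h"
  shows "integrable unitM (h :: real \<Rightarrow> real)"
proof -
  interpret prob_space unitM by (rule prob_space_unitM)
  have "sets unitM = sets (restrict_space borel {0..1::real})"
    by (rule sets_restrict_space_cong) simp
  then have "h \<in> borel_measurable unitM"
    using borel_measurable_continuous_on_restrict[OF assms] measurable_cong_sets by blast
  moreover obtain B where "\<forall>y\<in>{0..1}. norm (h y) \<le> B"
    using compact_imp_bounded[OF compact_continuous_image[OF assms compact_Icc]]
    by (auto simp: bounded_iff)
  ultimately show ?thesis
    by (intro integrable_const_bound[of _ B]) (auto simp: space_restrict_space)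
qed

lemma integral_unitM_eq_integral:
  assumes "continuous_on {0..1} h"
  shows "integral\<^sup>L unitM h = integral {0..1} (h :: real \<Rightarrow> real)"
proof -
  have "integral\<^sup>L unitM h = (LINT x:{0..1}|lborel. h x)"
    by (subst integral_restrict_space) (auto simp: set_lebesgue_integral_def)
  also have "\<dots> = integral {0..1} h"
    by (rule set_borel_integral_eq_integral(2)[OF borel_integrable_atLeastAtMost'[OF assms]])
  finally show ?thesis .
qed

lemma integral_unitM_centered: "(\<integral>y. y - 1/2 \<partial>unitM) = 0"
proof -
  have "((\<lambda>y::real. y - 1/2) has_integral ((1 - 1/2)\<^sup>2/2 - (0 - 1/2)\<^sup>2/2)) {0..1}"
    by (rule fundamental_theorem_of_calculus)
      (auto intro!: derivative_eq_intros simp flip: has_real_derivative_iff_has_vector_derivative)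
  then show ?thesis
    by (subst integral_unitM_eq_integral) (auto intro!: continuous_intros dest: integral_unique)
qed

lemma integral_unitM_centered_sq: "(\<integral>y. (y - 1/2)\<^sup>2 \<partial>unitM) = 1/12"
proof -
  have "((\<lambda>y::real. (y - 1/2)\<^sup>2) has_integral ((1 - 1/2)^3/3 - (0 - 1/2)^3/3)) {0..1}"
    by (rule fundamental_theorem_of_calculus)
      (auto intro!: derivative_eq_intros simp: power2_eq_square
        simp flip: has_real_derivative_iff_has_vector_derivative)
  then show ?thesis
    by (subst integral_unitM_eq_integral)
      (auto intro!: continuous_intros dest: integral_unique simp: power_divide)
qed

lemma integral_cubeM_prod:
  fixes h :: "nat \<Rightarrow> real \<Rightarrow> real"
  assumes J: "J \<subseteq> {1..p}" and h: "\<And>j. j \<in> J \<Longrightarrow> continuous_on {0..1} (h j)"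
  shows "(\<integral>x. (\<Prod>j\<in>J. h j (x j)) \<partial>cubeM p) = (\<Prod>j\<in>J. integral\<^sup>L unitM (h j))"
proof -
  interpret product_prob_space "\<lambda>_::nat. unitM" by (rule product_prob_space_unitM)
  define H where "H j = (if j \<in> J then h j else (\<lambda>_. 1))" for j
  have H_outside: "H j = (\<lambda>_. 1)" if "j \<in> {1..p} - J" for j
    using that by (simp add: H_def)
  have "(\<integral>x. (\<Prod>j\<in>{1..p}. H j (x j)) \<partial>cubeM p) = (\<Prod>j\<in>{1..p}. integral\<^sup>L unitM (H j))"
    unfolding cubeM_def by (rule product_integral_prod) (auto simp: H_def intro: integrable_unitM_continuous_on h)
  moreover have "(\<Prod>j\<in>{1..p}. H j (x j)) = (\<Prod>j\<in>J. h j (x j))" for x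
    by (rule prod.mono_neutral_cong_right) (use J in \<open>auto simp: H_outside H_def\<close>)
  moreover have "(\<Prod>j\<in>{1..p}. integral\<^sup>L unitM (H j)) = (\<Prod>j\<in>J. integral\<^sup>L unitM (h j))"
    by (rule prod.mono_neutral_cong_right)
      (use J prob_space.prob_space[OF prob_space_unitM] in \<open>auto simp: H_outside H_def\<close>)
  ultimately show ?thesis by simp
qed

lemma integral_cubeM_centered:
  assumes "j \<in> {1..p}"
  shows "(\<integral>x. x j - 1/2 \<partial>cubeM p) = 0"
  using integral_cubeM_prod[of "{j}" p "\<lambda>_ y. y - 1/2"] assms
  by (simp add: integral_unitM_centered continuous_intros)

lemma integral_cubeM_centered_mult:
  assumes "j \<in> {1..p}" "k \<in> {1..p}"
  shows "(\<integral>x. (x j - 1/2) * (x k - 1/2) \<partial>cubeM p) = (if j = k then 1/12 else 0)"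
proof (cases "j = k")
  case True
  have "(\<integral>x. (x j - 1/2)\<^sup>2 \<partial>cubeM p) = 1/12"
    using integral_cubeM_prod[of "{j}" p "\<lambda>_ y. (y - 1/2)\<^sup>2"] assms
    by (simp add: integral_unitM_centered_sq continuous_intros)
  with True show ?thesis
    by (simp add: power2_eq_square)
next
  case False
  then show ?thesis
    using integral_cubeM_prod[of "{j, k}" p "\<lambda>_ y. y - 1/2"] assms
    by (simp add: integral_unitM_centered continuous_intros)
qed

lemma (in prob_space) abs_integral_le_const:
  fixes F :: "'a \<Rightarrow> real"
  assumes "\<And>x. x \<in> space M \<Longrightarrow> \<bar>F x\<bar> \<le> B"
  shows "\<bar>expectation F\<bar> \<le> B"
proof (cases "integrable M F")
  case True
  have "\<bar>expectation F\<bar> \<le> expectation (\<lambda>x. \<bar>F x\<bar>)"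
    using integral_norm_bound[of M F] by simp
  also have "\<dots> \<le> B"
    using True assms by (intro integral_le_const) auto
  finally show ?thesis .
next
  case False
  obtain x where "x \<in> space M"
    using not_empty by blast
  with assms[of x] False show ?thesis
    by (simp add: not_integrable_integral_eq)
qed

lemma (in prob_space) integral_const_plus_orthogonal_sum_sq:
  fixes \<phi> :: "'i \<Rightarrow> 'a \<Rightarrow> real"
  assumes J: "finite J"
    and int: "\<And>j. j \<in> J \<Longrightarrow> integrable M (\<phi> j)"
    and int_mult: "\<And>j k. j \<in> J \<Longrightarrow> k \<in> J \<Longrightarrow> integrable M (\<lambda>x. \<phi> j x * \<phi> k x)"
    and centered: "\<And>j. j \<in> J \<Longrightarrow> expectation (\<phi> j) = 0"
    and orthogonal: "\<And>j k. j \<in> J \<Longrightarrow> k \<in> J \<Longrightarrow> j \<noteq> k \<Longrightarrow> expectation (\<lambda>x. \<phi> j x * \<phi> k x) = 0"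
  shows "expectation (\<lambda>x. (d + (\<Sum>j\<in>J. \<phi> j x))\<^sup>2) = d\<^sup>2 + (\<Sum>j\<in>J. expectation (\<lambda>x. (\<phi> j x)\<^sup>2))"
proof -
  have expand: "(d + (\<Sum>j\<in>J. \<phi> j x))\<^sup>2 = d\<^sup>2 + 2 * d * (\<Sum>j\<in>J. \<phi> j x) + (\<Sum>j\<in>J. \<Sum>k\<in>J. \<phi> j x * \<phi> k x)" for x
    by (simp add: power2_eq_square algebra_simps sum_product)
  have int_sum: "integrable M (\<lambda>x. \<Sum>j\<in>J. \<phi> j x)"
    using int by simp
  have int_double_sum: "integrable M (\<lambda>x. \<Sum>j\<in>J. \<Sum>k\<in>J. \<phi> j x * \<phi> k x)"
    using int_mult by simp
  have "expectation (\<lambda>x. \<Sum>j\<in>J. \<phi> j x) = 0"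
    using int centered by (simp add: Bochner_Integration.integral_sum)
  moreover have "expectation (\<lambda>x. \<Sum>j\<in>J. \<Sum>k\<in>J. \<phi> j x * \<phi> k x) = (\<Sum>j\<in>J. expectation (\<lambda>x. (\<phi> j x)\<^sup>2))"
  proof -
    have "expectation (\<lambda>x. \<Sum>j\<in>J. \<Sum>k\<in>J. \<phi> j x * \<phi> k x) = (\<Sum>j\<in>J. \<Sum>k\<in>J. expectation (\<lambda>x. \<phi> j x * \<phi> k x))"
      using int_mult by (simp add: Bochner_Integration.integral_sum)
    also have "\<dots> = (\<Sum>j\<in>J. expectation (\<lambda>x. \<phi> j x * \<phi> j x))"
      using J orthogonal by (intro sum.cong refl) (auto simp: sum.remove intro!: sum.neutral)
    finally show ?thesis
      by (simp add: power2_eq_square)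
  qed
  ultimately show ?thesis
    unfolding expand using int_sum int_double_sum prob_space by simp
qed

definition coord_cov :: "((nat \<Rightarrow> real) \<Rightarrow> real) \<Rightarrow> nat \<Rightarrow> nat \<Rightarrow> real" where
  "coord_cov f p j = (\<integral>x. (x j - 1/2) * f x \<partial>cubeM p)"

lemma coord_cov_eq:
  assumes "continuous_on (cube p) f"
  shows "coord_cov f p j = (\<integral>x. x j * f x \<partial>cubeM p) - 1/2 * (\<integral>x. f x \<partial>cubeM p)"
proof -
  have "integrable (cubeM p) (\<lambda>x. x j * f x)" "integrable (cubeM p) (\<lambda>x. 1/2 * f x)"
    by (intro integrable_cubeM_continuous_on continuous_intros assms)+
  then show ?thesis
    unfolding coord_cov_def by (simp add: left_diff_distrib)
qed

lemma integral_cubeM_centered_affine_sq: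
  assumes A: "A \<subseteq> {1..p}"
  shows "(\<integral>x. (d + (\<Sum>j\<in>A. c j * (x j - 1/2)))\<^sup>2 \<partial>cubeM p) = d\<^sup>2 + (\<Sum>j\<in>A. (c j)\<^sup>2 / 12)"
proof -
  interpret prob_space "cubeM p" by (rule prob_space_cubeM)
  have product: "(\<integral>x. (c j * (x j - 1/2)) * (c k * (x k - 1/2)) \<partial>cubeM p)
      = c j * c k * (if j = k then 1/12 else 0)" if "j \<in> A" "k \<in> A" for j k
  proof -
    have "(\<integral>x. (c j * (x j - 1/2)) * (c k * (x k - 1/2)) \<partial>cubeM p)
        = c j * c k * (\<integral>x. (x j - 1/2) * (x k - 1/2) \<partial>cubeM p)"
      by (simp add: ac_simps flip: integral_mult_right_zero)
    moreover have "j \<in> {1..p}" "k \<in> {1..p}"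
      using that A by auto
    ultimately show ?thesis
      by (simp add: integral_cubeM_centered_mult)
  qed
  have "(\<integral>x. (d + (\<Sum>j\<in>A. c j * (x j - 1/2)))\<^sup>2 \<partial>cubeM p)
      = d\<^sup>2 + (\<Sum>j\<in>A. \<integral>x. (c j * (x j - 1/2))\<^sup>2 \<partial>cubeM p)"
  proof (rule integral_const_plus_orthogonal_sum_sq)
    show "finite A"
      using A finite_subset by blast
    show "expectation (\<lambda>x. c j * (x j - 1/2)) = 0" if "j \<in> A" for j
      using that A integral_cubeM_centered by auto
  qed (use product in \<open>auto intro!: integrable_cubeM_continuous_on continuous_intros\<close>)
  also have "\<dots> = d\<^sup>2 + (\<Sum>j\<in>A. (c j)\<^sup>2 / 12)"
    using product by (simp add: power2_eq_square)
  finally show ?thesis .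
qed

lemma lsq_risk_decomposition:
  fixes f :: "(nat \<Rightarrow> real) \<Rightarrow> real"
  assumes f: "continuous_on (cube p) f" and A: "A \<subseteq> {1..p}"
  defines "\<mu> \<equiv> \<integral>x. f x \<partial>cubeM p"
  shows "lsq_risk f p A c0 c =
    ((\<integral>x. (f x)\<^sup>2 \<partial>cubeM p) - \<mu>\<^sup>2 - (\<Sum>j\<in>A. 12 * (coord_cov f p j)\<^sup>2))
    + (c0 + (\<Sum>j\<in>A. c j / 2) - \<mu>)\<^sup>2 + (\<Sum>j\<in>A. (c j - 12 * coord_cov f p j)\<^sup>2 / 12)"
proof -
  define d where "d = c0 + (\<Sum>j\<in>A. c j / 2)"
  define L where "L x = d + (\<Sum>j\<in>A. c j * (x j - 1/2))" for x :: "nat \<Rightarrow> real"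
  have integrable: "integrable (cubeM p) (\<lambda>x. (f x)\<^sup>2)" "integrable (cubeM p) (\<lambda>x. f x * L x)"
    "integrable (cubeM p) (\<lambda>x. (L x)\<^sup>2)" "integrable (cubeM p) (\<lambda>x. d * f x)"
    "\<And>j. integrable (cubeM p) (\<lambda>x. c j * ((x j - 1/2) * f x))"
    unfolding L_def by (intro integrable_cubeM_continuous_on continuous_intros f)+
  have "(f x - c0 - (\<Sum>j\<in>A. c j * x j))\<^sup>2 = (f x)\<^sup>2 - 2 * (f x * L x) + (L x)\<^sup>2" for x
  proof -
    have residual: "f x - c0 - (\<Sum>j\<in>A. c j * x j) = f x - L x"
      unfolding L_def d_def
      by (simp add: algebra_simps sum.distrib sum_subtractf sum_divide_distrib)
    show ?thesis
      unfolding residual power2_diff by (simp add: mult.assoc)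
  qed
  then have "lsq_risk f p A c0 c = (\<integral>x. (f x)\<^sup>2 - 2 * (f x * L x) + (L x)\<^sup>2 \<partial>cubeM p)"
    unfolding lsq_risk_def by presburger
  also have "\<dots> = (\<integral>x. (f x)\<^sup>2 \<partial>cubeM p) - 2 * (\<integral>x. f x * L x \<partial>cubeM p) + (\<integral>x. (L x)\<^sup>2 \<partial>cubeM p)"
    using integrable by simp
  also have "(\<integral>x. f x * L x \<partial>cubeM p) = d * \<mu> + (\<Sum>j\<in>A. c j * coord_cov f p j)"
  proof -
    have "f x * L x = d * f x + (\<Sum>j\<in>A. c j * ((x j - 1/2) * f x))" for x
      unfolding L_def by (simp add: distrib_left sum_distrib_left mult_ac)
    then show ?thesis
      using integrable by (simp add: Bochner_Integration.integral_sum coord_cov_def \<mu>_def)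
  qed
  also have "(\<integral>x. (L x)\<^sup>2 \<partial>cubeM p) = d\<^sup>2 + (\<Sum>j\<in>A. (c j)\<^sup>2 / 12)"
    unfolding L_def using A by (rule integral_cubeM_centered_affine_sq)
  also have "(\<Sum>j\<in>A. (c j)\<^sup>2 / 12) = (\<Sum>j\<in>A. (c j - 12 * coord_cov f p j)\<^sup>2 / 12)
      + 2 * (\<Sum>j\<in>A. c j * coord_cov f p j) - (\<Sum>j\<in>A. 12 * (coord_cov f p j)\<^sup>2)"
    by (simp add: power2_diff sum.distrib sum_subtractf sum_distrib_left
        add_divide_distrib diff_divide_distrib power_mult_distrib)
  finally show ?thesis
    by (simp add: d_def power2_diff)
qed

lemma is_lsq_coef_iff:
  fixes f :: "(nat \<Rightarrow> real) \<Rightarrow> real"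
  assumes f: "continuous_on (cube p) f" and A: "A \<subseteq> {1..p}"
  shows "is_lsq_coef f p A b0 b \<longleftrightarrow>
    (\<forall>j. j \<notin> A \<longrightarrow> b j = 0) \<and> (\<forall>j\<in>A. b j = 12 * coord_cov f p j) \<and>
    b0 = (\<integral>x. f x \<partial>cubeM p) - (\<Sum>j\<in>A. b j / 2)"
proof -
  define \<mu> where "\<mu> = (\<integral>x. f x \<partial>cubeM p)"
  define excess where "excess c0 c =
    (c0 + (\<Sum>j\<in>A. c j / 2) - \<mu>)\<^sup>2 + (\<Sum>j\<in>A. (c j - 12 * coord_cov f p j)\<^sup>2 / 12)" for c0 c
  have finite_A: "finite A"
    using A finite_subset by blast
  have excess_nonneg: "0 \<le> excess c0 c" for c0 c
    unfolding excess_def by (intro add_nonneg_nonneg sum_nonneg) auto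
  have excess_eq_0_iff: "excess c0 c = 0 \<longleftrightarrow>
      (\<forall>j\<in>A. c j = 12 * coord_cov f p j) \<and> c0 = \<mu> - (\<Sum>j\<in>A. c j / 2)" for c0 c
    unfolding excess_def using finite_A
    by (subst add_nonneg_eq_0_iff) (auto intro: sum_nonneg simp: sum_nonneg_eq_0_iff)
  obtain K where risk: "\<And>c0 c. lsq_risk f p A c0 c = K + excess c0 c"
    using lsq_risk_decomposition[OF f A] unfolding excess_def \<mu>_def by fastforce
  have "(\<forall>c0 c. lsq_risk f p A b0 b \<le> lsq_risk f p A c0 c) \<longleftrightarrow> excess b0 b = 0"
  proof
    assume "\<forall>c0 c. lsq_risk f p A b0 b \<le> lsq_risk f p A c0 c"
    then have "excess b0 b \<le> excess (\<mu> - (\<Sum>j\<in>A. 12 * coord_cov f p j / 2)) (\<lambda>j. 12 * coord_cov f p j)"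
      unfolding risk by (metis add_le_cancel_left)
    also have "\<dots> = 0"
      by (simp add: excess_eq_0_iff)
    finally show "excess b0 b = 0"
      using excess_nonneg by (simp add: order_antisym)
  qed (simp add: risk excess_nonneg)
  then show ?thesis
    unfolding is_lsq_coef_def excess_eq_0_iff \<mu>_def by blast
qed

lemma abs_integral_unitM_centered_mult_le:
  fixes h :: "real \<Rightarrow> real"
  assumes h: "continuous_on {0..1} h" and close: "\<And>y. y \<in> {0..1} \<Longrightarrow> \<bar>h y - K\<bar> \<le> s"
  shows "\<bar>\<integral>y. (y - 1/2) * h y \<partial>unitM\<bar> \<le> s/2"
proof -
  interpret prob_space unitM by (rule prob_space_unitM)
  have "integrable unitM (\<lambda>y. (y - 1/2) * (h y - K))" "integrable unitM (\<lambda>y. K * (y - 1/2))"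
    by (intro integrable_unitM_continuous_on continuous_intros h)+
  moreover have "(\<lambda>y. (y - 1/2) * h y) = (\<lambda>y. (y - 1/2) * (h y - K) + K * (y - 1/2))"
    by (simp add: fun_eq_iff field_simps)
  ultimately have "(\<integral>y. (y - 1/2) * h y \<partial>unitM) = (\<integral>y. (y - 1/2) * (h y - K) \<partial>unitM)"
    using integral_unitM_centered by simp
  also have "\<bar>\<dots>\<bar> \<le> s/2"
  proof (rule abs_integral_le_const)
    fix y assume "y \<in> space unitM"
    then have "y \<in> {0..1}"
      by (simp add: space_restrict_space)
    then have "\<bar>y - 1/2\<bar> \<le> 1/2" "\<bar>h y - K\<bar> \<le> s"
      using close unfolding abs_le_iff atLeastAtMost_iff by simp_all
    then have "\<bar>y - 1/2\<bar> * \<bar>h y - K\<bar> \<le> 1/2 * s"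
      by (intro mult_mono) auto
    then show "\<bar>(y - 1/2) * (h y - K)\<bar> \<le> s/2"
      by (simp add: abs_mult)
  qed
  finally show ?thesis .
qed

lemma abs_coord_cov_le:
  fixes f G :: "(nat \<Rightarrow> real) \<Rightarrow> real"
  assumes f: "continuous_on (cube p) f" and j: "j \<in> {1..p}"
    and G: "\<And>x y. G (x(j := y)) = G x"
    and close: "\<And>x. x \<in> cube p \<Longrightarrow> \<bar>f x - G x\<bar> \<le> s"
  shows "\<bar>coord_cov f p j\<bar> \<le> s/2"
proof -
  interpret product_prob_space "\<lambda>_::nat. unitM" by (rule product_prob_space_unitM)
  define I where "I = {1..p} - {j}"
  interpret rest: prob_space "Pi\<^sub>M I (\<lambda>_. unitM)"
    by (rule prob_space_PiM) (rule prob_space_unitM)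
  have cube_eq: "cubeM p = Pi\<^sub>M (insert j I) (\<lambda>_. unitM)"
    using j by (simp add: cubeM_def I_def insert_absorb)
  have "integrable (Pi\<^sub>M (insert j I) (\<lambda>_. unitM)) (\<lambda>x. (x j - 1/2) * f x)"
    unfolding cube_eq[symmetric] by (intro integrable_cubeM_continuous_on continuous_intros f)
  then have "coord_cov f p j = (\<integral>x. (\<integral>y. (y - 1/2) * f (x(j := y)) \<partial>unitM) \<partial>Pi\<^sub>M I (\<lambda>_. unitM))"
    unfolding coord_cov_def cube_eq by (subst product_integral_insert) (auto simp: I_def)
  also have "\<bar>\<dots>\<bar> \<le> s/2"
  proof (rule rest.abs_integral_le_const)
    fix x assume x: "x \<in> space (Pi\<^sub>M I (\<lambda>_. unitM))"
    have in_cube: "x(j := y) \<in> cube p" if "y \<in> {0..1}" for y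
      using x that j unfolding cube_def space_PiM space_restrict_space I_def
      by (auto simp: PiE_iff extensional_def)
    have "continuous_on {0..1} (\<lambda>y. x(j := y))"
    proof (rule continuous_on_coordinatewise_then_product)
      show "continuous_on {0..1} (\<lambda>y. (x(j := y)) i)" for i
        by (cases "i = j") simp_all
    qed
    then have "continuous_on {0..1} (\<lambda>y. f (x(j := y)))"
      by (rule continuous_on_compose2[OF f]) (use in_cube in auto)
    then show "\<bar>\<integral>y. (y - 1/2) * f (x(j := y)) \<partial>unitM\<bar> \<le> s/2"
      by (rule abs_integral_unitM_centered_mult_le[where K = "G x"]) (metis G close in_cube)
  qed
  finally show ?thesis .
qed

lemma abs_diff_le_SUP_restrict:
  fixes f g :: "(nat \<Rightarrow> real) \<Rightarrow> real"
  assumes f: "continuous_on (cube p) f" and g: "continuous_on (cube p0) g"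
    and "p0 \<le> p" and x: "x \<in> cube p"
  shows "\<bar>f x - g (restrict x {1..p0})\<bar> \<le> (SUP y\<in>cube p. \<bar>f y - g (restrict y {1..p0})\<bar>)"
proof (rule cSUP_upper[OF x])
  obtain Bf where Bf: "\<And>y. y \<in> cube p \<Longrightarrow> \<bar>f y\<bar> \<le> Bf"
    using bounded_continuous_on_cube[OF f] by blast
  obtain Bg where Bg: "\<And>y. y \<in> cube p0 \<Longrightarrow> \<bar>g y\<bar> \<le> Bg"
    using bounded_continuous_on_cube[OF g] by blast
  have "restrict y {1..p0} \<in> cube p0" if "y \<in> cube p" for y
    using that \<open>p0 \<le> p\<close> by (auto simp: cube_def PiE_iff)
  then have "\<bar>f y - g (restrict y {1..p0})\<bar> \<le> Bf + Bg" if "y \<in> cube p" for y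
    using Bf[OF that] Bg that by fastforce
  then show "bdd_above ((\<lambda>y. \<bar>f y - g (restrict y {1..p0})\<bar>) ` cube p)"
    by (rule bdd_aboveI2)
qed

theorem lemma6:
  fixes p p0 :: nat and f g :: "(nat \<Rightarrow> real) \<Rightarrow> real" and \<eta> \<tau> :: real and A :: "nat set"
  assumes "1 \<le> p0" and "p0 < p"
    and "continuous_on (cube p) f"
    and "continuous_on (cube p0) g"
    and "\<eta> > 0"
    and "(SUP x\<in>cube p. \<bar>f x - g (restrict x {1..p0})\<bar>) < \<eta>"
    and "\<tau> > 0"
    and "\<forall>j\<in>{1..p0}. \<bar>(\<integral>x. x j * f x \<partial>cubeM p) - 1/2 * (\<integral>x. f x \<partial>cubeM p)\<bar> > \<tau>"
    and "A \<subseteq> {1..p}"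
  shows "(\<exists>b0 b. is_lsq_coef f p A b0 b) \<and>
    (\<forall>b0 b. is_lsq_coef f p A b0 b \<longrightarrow>
      (\<forall>j\<in>A. b j = 12 * ((\<integral>x. x j * f x \<partial>cubeM p) - 1/2 * (\<integral>x. f x \<partial>cubeM p))) \<and>
      b0 = (\<integral>x. f x \<partial>cubeM p) - (\<Sum>j\<in>A. b j / 2) \<and>
      (\<forall>j\<in>A \<inter> {1..p0}. \<bar>b j\<bar> > 12 * \<tau>) \<and>
      (\<forall>j\<in>A - {1..p0}. \<bar>b j\<bar> < 12 * \<eta>))"
proof -
  note f = assms(3) and A = assms(9)
  define b where "b j = (if j \<in> A then 12 * coord_cov f p j else 0)" for j
  have "is_lsq_coef f p A ((\<integral>x. f x \<partial>cubeM p) - (\<Sum>j\<in>A. b j / 2)) b"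
    unfolding is_lsq_coef_iff[OF f A] b_def by simp
  then have "\<exists>b0 b. is_lsq_coef f p A b0 b"
    by blast
  moreover have "\<bar>coord_cov f p j\<bar> < \<eta>" if "j \<in> A" "p0 < j" for j
  proof -
    have "\<bar>coord_cov f p j\<bar> \<le> (SUP x\<in>cube p. \<bar>f x - g (restrict x {1..p0})\<bar>) / 2"
      using that A assms(2,4) f
      by (intro abs_coord_cov_le[OF f, where G = "\<lambda>x. g (restrict x {1..p0})"]
          abs_diff_le_SUP_restrict) auto
    then show ?thesis
      using assms(5,6) by linarith
  qed
  moreover have "\<bar>coord_cov f p j\<bar> > \<tau>" if "j \<in> {1..p0}" for j
    using that assms(8) coord_cov_eq[OF f] by simp
  ultimately show ?thesis
    unfolding is_lsq_coef_iff[OF f A] coord_cov_eq[OF f, symmetric]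
    using A by (auto simp: abs_mult)
qed

end
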